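(* Let $n \ge 2$ be an integer and let $\underline{x}_1,\bar{x}_1,\underline{x}_2,\bar{x}_2 \in \mathbb{R}$ with $1 \le \underline{x}_i < \bar{x}_i$ for $i \in \{1,2\}$. For every $(x_1,x_2) \in [\underline{x}_1,\bar{x}_1] \times [\underline{x}_2,\bar{x}_2]$, every point $y \in \mathbb{R}^{n+2}$ that is feasible for the lower-level problem $$\max_{y \in \mathbb{R}^{n+2}} \; y_1 - y_n\,(x_1 + x_2 - y_{n+1} - y_{n+2})$$ subject to $y_1 + y_n = \tfrac12$, $y_i^2 \le y_{i+1}$ for $i \in \{1,\dots,n-1\}$, $y_i \ge 0$ for $i \in \{1,\dots,n\}$, $y_{n+1} \in [0,x_1]$, $y_{n+2} \in [-x_2,x_2]$, satisfies $y_n > 0$.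
   Context: This lower-level problem is the follower's problem of a bilevel problem whose leader chooses $x=(x_1,x_2)$ in the box $[\underline{x}_1,\bar{x}_1] \times [\underline{x}_2,\bar{x}_2]$. *)

theory Defs
  imports Complex_Main
begin

text \<open>Points of R^(n+2) are represented as functions y :: nat => real, using only the
  components y 1, ..., y (n+2) (1-based indexing as in the paper).\<close>

definition lower_feasible :: "nat \<Rightarrow> real \<Rightarrow> real \<Rightarrow> (nat \<Rightarrow> real) \<Rightarrow> bool" where
  "lower_feasible n x1 x2 y \<longleftrightarrow>
     y 1 + y n = 1/2
   \<and> (\<forall>i\<in>{1..n-1}. (y i)^2 \<le> y (i+1))
   \<and> (\<forall>i\<in>{1..n}. y i \<ge> 0)
   \<and> 0 \<le> y (n+1) \<and> y (n+1) \<le> x1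
   \<and> - x2 \<le> y (n+2) \<and> y (n+2) \<le> x2"

definition lower_objective :: "nat \<Rightarrow> real \<Rightarrow> real \<Rightarrow> (nat \<Rightarrow> real) \<Rightarrow> real" where
  "lower_objective n x1 x2 y = y 1 - y n * (x1 + x2 - y (n+1) - y (n+2))"

end

theory Submission
  imports Defs
begin

text \<open>Since \<open>y\<^sub>1 + y\<^sub>n = 1/2\<close> with both terms nonnegative, one of them is positive, and
  positivity of \<open>y\<^sub>1\<close> propagates along the chain \<open>y\<^sub>i\<^sup>2 \<le> y\<^sub>i\<^sub>+\<^sub>1\<close> up to \<open>y\<^sub>n\<close>.\<close>

lemma pos_of_square_le_chain:
  fixes y :: "nat \<Rightarrow> real"
  assumes "0 < y 1" and chain: "\<forall>i\<in>{1..n-1}. (y i)^2 \<le> y (i+1)"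
    and "1 \<le> k" and "k \<le> n"
  shows "0 < y k"
  using \<open>1 \<le> k\<close>
proof (induction k rule: dec_induct)
  case base
  show ?case using \<open>0 < y 1\<close> .
next
  case (step m)
  have "0 < (y m)^2" using step by simp
  also have "\<dots> \<le> y (Suc m)" using chain step.hyps \<open>k \<le> n\<close> by auto
  finally show ?case .
qed

theorem mainTheorem1:
  fixes n :: nat and xl1 xu1 xl2 xu2 x1 x2 :: real and y :: "nat \<Rightarrow> real"
  assumes "n \<ge> 2"
    and "1 \<le> xl1" and "xl1 < xu1" and "1 \<le> xl2" and "xl2 < xu2"
    and "x1 \<in> {xl1..xu1}" and "x2 \<in> {xl2..xu2}"
    and "lower_feasible n x1 x2 y"
  shows "y n > 0"
proof -
  have sum: "y 1 + y n = 1/2"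
    and chain: "\<forall>i\<in>{1..n-1}. (y i)^2 \<le> y (i+1)"
    and nonneg: "\<forall>i\<in>{1..n}. y i \<ge> 0"
    using \<open>lower_feasible n x1 x2 y\<close> unfolding lower_feasible_def by auto
  have "0 \<le> y 1" "0 \<le> y n" using nonneg \<open>n \<ge> 2\<close> by auto
  with sum consider "0 < y 1" | "0 < y n" by linarith
  then show ?thesis
  proof cases
    case 1
    show ?thesis using pos_of_square_le_chain[OF 1 chain] \<open>n \<ge> 2\<close> by simp
  next
    case 2
    show ?thesis using 2 .
  qed
qed

end
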